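(* Let $\{\boldsymbol y^{MSLP}_n\}_{n\in\mathcal T}$, $\{u^{MSLP}_n\}_{n\in\mathcal T\setminus\{1\}}$ be the values of the $\boldsymbol y$- and $u$-variables in an optimal solution of the linear programming relaxation of the multistage model (integrality of $\boldsymbol x$ dropped). Define $\boldsymbol x^{MS}_1=\boldsymbol B_{t_1}\boldsymbol y^{MSLP}_1$, $\boldsymbol x^{MS}_n=\max_{m\in\mathcal P(n)}\boldsymbol B_{t_m}\boldsymbol y^{MSLP}_m-\max_{m\in\mathcal P(a(n))}\boldsymbol B_{t_m}\boldsymbol y^{MSLP}_m$ ($n\ne1$), $\eta^{MS}_n=\max_{m\in\mathcal C(n)}\{\boldsymbol f_{t_m}^{\mathsf T}\sum_{l\in\mathcal P(m)}\boldsymbol x^{MS}_l+\boldsymbol c_{t_m}^{\mathsf T}\boldsymbol y^{MSLP}_m-u^{MSLP}_m\}$ ($n\notin\mathcal L$), $\boldsymbol x^{TS}_1=\lceil\boldsymbol B_{t_1}\boldsymbol y^{MSLP}_1\rceil$, $\boldsymbol x^{TS}_n=\max_{m\in\mathcal P(n)}\lceil\max_{l\in\mathcal T_{t_m}}\boldsymbol B_{t_l}\boldsymbol y^{MSLP}_l\rceil-\max_{m\in\mathcal P(a(n))}\lceil\max_{l\in\mathcal T_{t_m}}\boldsymbol B_{t_l}\boldsymbol y^{MSLP}_l\rceil$ ($n\ne1$), $\eta^{TS}_n=\max_{m\in\mathcal C(n)}\{\boldsymbol f_{t_m}^{\mathsf T}\sum_{l\in\mathcal P(m)}\boldsymbol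 x^{TS}_l+\boldsymbol c_{t_m}^{\mathsf T}\boldsymbol y^{MSLP}_m-u^{MSLP}_m\}$ ($n\notin\mathcal L$). Then $$\mathrm{VMS}_R\le\mathrm{VMS}_R^{UB}:=\boldsymbol f_{t_1}^{\mathsf T}\big(\lceil\boldsymbol B_{t_1}\boldsymbol y^{MSLP}_1\rceil-\boldsymbol B_{t_1}\boldsymbol y^{MSLP}_1\big)+\sum_{n\in\mathcal T\setminus\{1\}}p_n(1-\lambda_{t_n})\boldsymbol f_{t_n}^{\mathsf T}\Big(\max_{m\in\mathcal P(n)}\big\lceil\max_{l\in\mathcal T_{t_m}}\boldsymbol B_{t_l}\boldsymbol y^{MSLP}_l\big\rceil-\max_{m\in\mathcal P(n)}\boldsymbol B_{t_m}\boldsymbol y^{MSLP}_m\Big)+\sum_{n\in\mathcal T\setminus\mathcal L}p_n\lambda_{t_n+1}\big(\eta^{TS}_n-\eta^{MS}_n\big).$$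
   Context: Setting. Fix integers $T\ge 2$ (periods), $M\ge1$ (facilities), $N\ge1$ (customer sites). For each period $t$: maintenance costs $f_{ti}\ge 0$ forming $\boldsymbol f_t\in\mathbb R^M$; operational costs $c_{tij}\ge0$ forming $\boldsymbol c_t\in\mathbb R^{MN}$; capacities $h_{ti}>0$. Vectors $\boldsymbol y\in\mathbb R^{MN}$ are indexed by pairs $(i,j)$; $(\boldsymbol A_t\boldsymbol y)_j=\sum_{i=1}^M y_{ij}$ defines $\boldsymbol A_t$ and $(\boldsymbol B_t\boldsymbol y)_i=\frac1{h_{ti}}\sum_{j=1}^N y_{ij}$ defines $\boldsymbol B_t$. Ceilings and maxima of vectors are componentwise. Scenario tree: a finite rooted tree with node set $\mathcal T$, root $1$, all root-to-leaf paths having $T$ nodes; $\mathcal T_t$ nodes at depth $t$, $t_n$ the period of $n$, $\mathcal L=\mathcal T_T$ the leaves, $a(n)$ the parent of $n\ne1$, $\mathcal C(n)$ the children of $n$, $\mathcal P(n)$ the nodes on the root-to-$n$ path (inclusive). Probabilities $p_n>0$ with $\sum_{n\in\mathcal T_t}p_n=1$ and $\sum_{m\in\mathcal C(n)}p_m=p_n$ ($n\notin\mathcal L$); demands $\boldsymbol d_n\in\mathbb R^N_{\ge0}$. Risk parameters $\lambda_t\in[0,1]$, $\alpha_t\in(0,1)$, $t=2,\ldots,T$. $\tilde{\boldsymbol f}_n=\boldsymbol f_{t_n}$ if $n=1$, else $(1-\lambda_{t_n})\boldsymbol f_{t_n}$; $\tilde{\boldsymbol c}_n=\boldsymbol c_{t_n}$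 if $n=1$, else $(1-\lambda_{t_n})\boldsymbol c_{t_n}$; $\tilde\lambda_n=0$ if $n\in\mathcal L$, else $\lambda_{t_n+1}$; $\tilde\alpha_n=0$ if $n=1$, else $\lambda_{t_n}/(1-\alpha_{t_n})$. Multistage model: $z^{MS}_R=\min\sum_{n\in\mathcal T}p_n\big(\tilde{\boldsymbol f}_n^{\mathsf T}\sum_{m\in\mathcal P(n)}\boldsymbol x_m+\tilde{\boldsymbol c}_n^{\mathsf T}\boldsymbol y_n+\tilde\lambda_n\eta_n+\tilde\alpha_nu_n\big)$ over $\boldsymbol x_n\in\mathbb Z^M_+$, $\boldsymbol y_n\in\mathbb R^{MN}_+$ ($n\in\mathcal T$), $\eta_n\in\mathbb R$ ($n\notin\mathcal L$), $u_n\ge0$ ($n\ne1$), subject to $\boldsymbol A_{t_n}\boldsymbol y_n=\boldsymbol d_n$, $\boldsymbol B_{t_n}\boldsymbol y_n\le\sum_{m\in\mathcal P(n)}\boldsymbol x_m$ ($n\in\mathcal T$) and $u_n+\eta_{a(n)}\ge\boldsymbol f_{t_n}^{\mathsf T}\sum_{m\in\mathcal P(n)}\boldsymbol x_m+\boldsymbol c_{t_n}^{\mathsf T}\boldsymbol y_n$ ($n\ne1$). Two-stage model: the multistage model plus the constraints $\boldsymbol x_m=\boldsymbol x_n$ for all $m,n\in\mathcal T_t$, $t=1,\ldots,T$; optimal value $z^{TS}_R$. $\mathrm{VMS}_R:=z^{TS}_R-z^{MS}_R$. *)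

theory Defs
  imports Complex_Main
begin

text \<open>An instance of the risk-averse multistage facility location problem.
 Periods are 1..T, facilities are indexed by i < M, customer sites by j < N.
 fc t i = f_{ti}, cc t i j = c_{tij}, cap t i = h_{ti}, lam t = lambda_t, alp t = alpha_t.\<close>

record 'v inst =
  nodes :: "'v set"
  root :: 'v
  par :: "'v \<Rightarrow> 'v"
  per :: "'v \<Rightarrow> nat"
  T :: nat
  M :: nat
  N :: nat
  fc :: "nat \<Rightarrow> nat \<Rightarrow> real"
  cc :: "nat \<Rightarrow> nat \<Rightarrow> nat \<Rightarrow> real"
  cap :: "nat \<Rightarrow> nat \<Rightarrow> real"
  prob :: "'v \<Rightarrow> real"
  dem :: "'v \<Rightarrow> nat \<Rightarrow> real"
  lam :: "nat \<Rightarrow> real"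
  alp :: "nat \<Rightarrow> real"

definition Bv :: "'v inst \<Rightarrow> nat \<Rightarrow> (nat \<Rightarrow> nat \<Rightarrow> real) \<Rightarrow> nat \<Rightarrow> real" where
  "Bv D t y i = (1 / cap D t i) * (\<Sum>j<N D. y i j)"

definition Pth :: "'v inst \<Rightarrow> 'v \<Rightarrow> 'v set" where
  "Pth D n = {(par D ^^ k) n | k. k < per D n}"

definition Ch :: "'v inst \<Rightarrow> 'v \<Rightarrow> 'v set" where
  "Ch D n = {m \<in> nodes D. m \<noteq> root D \<and> par D m = n}"

definition Lev :: "'v inst \<Rightarrow> nat \<Rightarrow> 'v set" where
  "Lev D t = {n \<in> nodes D. per D n = t}"

definition Leaves :: "'v inst \<Rightarrow> 'v set" where
  "Leaves D = Lev D (T D)"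

definition scen_tree :: "'v inst \<Rightarrow> bool" where
  "scen_tree D \<longleftrightarrow> finite (nodes D) \<and> root D \<in> nodes D \<and> per D (root D) = 1 \<and>
     (\<forall>n\<in>nodes D. n \<noteq> root D \<longrightarrow> par D n \<in> nodes D \<and> per D n = per D (par D n) + 1) \<and>
     (\<forall>n\<in>nodes D. 1 \<le> per D n \<and> per D n \<le> T D) \<and>
     (\<forall>n\<in>nodes D. per D n < T D \<longrightarrow> Ch D n \<noteq> {})"

definition valid_inst :: "'v inst \<Rightarrow> bool" where
  "valid_inst D \<longleftrightarrow> scen_tree D \<and> T D \<ge> 2 \<and> M D \<ge> 1 \<and> N D \<ge> 1 \<and>
     (\<forall>t\<in>{1..T D}. \<forall>i<M D. fc D t i \<ge> 0 \<and> cap D t i > 0 \<and> (\<forall>j<N D. cc D t i j \<ge> 0)) \<and>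
     (\<forall>n\<in>nodes D. prob D n > 0) \<and>
     (\<forall>t\<in>{1..T D}. (\<Sum>n\<in>Lev D t. prob D n) = 1) \<and>
     (\<forall>n\<in>nodes D - Leaves D. (\<Sum>m\<in>Ch D n. prob D m) = prob D n) \<and>
     (\<forall>n\<in>nodes D. \<forall>j<N D. dem D n j \<ge> 0) \<and>
     (\<forall>t\<in>{2..T D}. 0 \<le> lam D t \<and> lam D t \<le> 1 \<and> 0 < alp D t \<and> alp D t < 1)"

text \<open>Coefficients: ftil_n = wgt n * f_{t_n}, ctil_n = wgt n * c_{t_n}\<close>
definition wgt :: "'v inst \<Rightarrow> 'v \<Rightarrow> real" where
  "wgt D n = (if n = root D then 1 else 1 - lam D (per D n))"

definition lamt :: "'v inst \<Rightarrow> 'v \<Rightarrow> real" where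
  "lamt D n = (if n \<in> Leaves D then 0 else lam D (per D n + 1))"

definition alpt :: "'v inst \<Rightarrow> 'v \<Rightarrow> real" where
  "alpt D n = (if n = root D then 0 else lam D (per D n) / (1 - alp D (per D n)))"

definition stage_cost :: "'v inst \<Rightarrow> ('v \<Rightarrow> nat \<Rightarrow> real) \<Rightarrow> ('v \<Rightarrow> nat \<Rightarrow> nat \<Rightarrow> real) \<Rightarrow> 'v \<Rightarrow> real" where
  "stage_cost D x y n = (\<Sum>i<M D. fc D (per D n) i * (\<Sum>m\<in>Pth D n. x m i))
     + (\<Sum>i<M D. \<Sum>j<N D. cc D (per D n) i j * y n i j)"

definition obj :: "'v inst \<Rightarrow> ('v \<Rightarrow> nat \<Rightarrow> real) \<Rightarrow> ('v \<Rightarrow> nat \<Rightarrow> nat \<Rightarrow> real)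
     \<Rightarrow> ('v \<Rightarrow> real) \<Rightarrow> ('v \<Rightarrow> real) \<Rightarrow> real" where
  "obj D x y eta u = (\<Sum>n\<in>nodes D. prob D n *
     (wgt D n * stage_cost D x y n + lamt D n * eta n + alpt D n * u n))"

text \<open>Feasibility: integral = integrality of x; ts = two-stage (nonanticipativity per period)\<close>
definition feasible :: "'v inst \<Rightarrow> bool \<Rightarrow> bool \<Rightarrow> ('v \<Rightarrow> nat \<Rightarrow> real) \<Rightarrow> ('v \<Rightarrow> nat \<Rightarrow> nat \<Rightarrow> real)
     \<Rightarrow> ('v \<Rightarrow> real) \<Rightarrow> ('v \<Rightarrow> real) \<Rightarrow> bool" where
  "feasible D integral ts x y eta u \<longleftrightarrow>
     (\<forall>n\<in>nodes D. \<forall>i<M D. x n i \<ge> 0 \<and> (integral \<longrightarrow> x n i \<in> \<int>)) \<and>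
     (\<forall>n\<in>nodes D. \<forall>i<M D. \<forall>j<N D. y n i j \<ge> 0) \<and>
     (\<forall>n\<in>nodes D - {root D}. u n \<ge> 0) \<and>
     (\<forall>n\<in>nodes D. \<forall>j<N D. (\<Sum>i<M D. y n i j) = dem D n j) \<and>
     (\<forall>n\<in>nodes D. \<forall>i<M D. Bv D (per D n) (y n) i \<le> (\<Sum>m\<in>Pth D n. x m i)) \<and>
     (\<forall>n\<in>nodes D - {root D}. u n + eta (par D n) \<ge> stage_cost D x y n) \<and>
     (ts \<longrightarrow> (\<forall>t\<in>{1..T D}. \<forall>m\<in>Lev D t. \<forall>n\<in>Lev D t. \<forall>i<M D. x m i = x n i))"

definition zMS :: "'v inst \<Rightarrow> real" where
  "zMS D = Inf {obj D x y eta u | x y eta u. feasible D True False x y eta u}"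

definition zTS :: "'v inst \<Rightarrow> real" where
  "zTS D = Inf {obj D x y eta u | x y eta u. feasible D True True x y eta u}"

definition VMS :: "'v inst \<Rightarrow> real" where
  "VMS D = zTS D - zMS D"

definition mxB :: "'v inst \<Rightarrow> ('v \<Rightarrow> nat \<Rightarrow> nat \<Rightarrow> real) \<Rightarrow> 'v \<Rightarrow> nat \<Rightarrow> real" where
  "mxB D y n i = Max ((\<lambda>m. Bv D (per D m) (y m) i) ` Pth D n)"

definition mxC :: "'v inst \<Rightarrow> ('v \<Rightarrow> nat \<Rightarrow> nat \<Rightarrow> real) \<Rightarrow> 'v \<Rightarrow> nat \<Rightarrow> real" where
  "mxC D y n i = Max ((\<lambda>m. real_of_int \<lceil>Max ((\<lambda>l. Bv D (per D l) (y l) i) ` Lev D (per D m))\<rceil>) ` Pth D n)"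

definition xMS :: "'v inst \<Rightarrow> ('v \<Rightarrow> nat \<Rightarrow> nat \<Rightarrow> real) \<Rightarrow> 'v \<Rightarrow> nat \<Rightarrow> real" where
  "xMS D y n i = (if n = root D then Bv D (per D n) (y n) i else mxB D y n i - mxB D y (par D n) i)"

definition xTS :: "'v inst \<Rightarrow> ('v \<Rightarrow> nat \<Rightarrow> nat \<Rightarrow> real) \<Rightarrow> 'v \<Rightarrow> nat \<Rightarrow> real" where
  "xTS D y n i = (if n = root D then real_of_int \<lceil>Bv D (per D n) (y n) i\<rceil>
                  else mxC D y n i - mxC D y (par D n) i)"

definition eta_of :: "'v inst \<Rightarrow> ('v \<Rightarrow> nat \<Rightarrow> real) \<Rightarrow> ('v \<Rightarrow> nat \<Rightarrow> nat \<Rightarrow> real) \<Rightarrow> ('v \<Rightarrow> real) \<Rightarrow> 'v \<Rightarrow> real" where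
  "eta_of D x y u n = Max ((\<lambda>m. stage_cost D x y m - u m) ` Ch D n)"

definition VMS_UB :: "'v inst \<Rightarrow> ('v \<Rightarrow> nat \<Rightarrow> nat \<Rightarrow> real) \<Rightarrow> ('v \<Rightarrow> real) \<Rightarrow> real" where
  "VMS_UB D y u =
     (\<Sum>i<M D. fc D (per D (root D)) i *
        (real_of_int \<lceil>Bv D (per D (root D)) (y (root D)) i\<rceil> - Bv D (per D (root D)) (y (root D)) i))
   + (\<Sum>n\<in>nodes D - {root D}. prob D n * (1 - lam D (per D n)) *
        (\<Sum>i<M D. fc D (per D n) i * (mxC D y n i - mxB D y n i)))
   + (\<Sum>n\<in>nodes D - Leaves D. prob D n * lam D (per D n + 1) *
        (eta_of D (xTS D y) y u n - eta_of D (xMS D y) y u n))"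

end

theory Submission
  imports Defs
begin

(* Both candidate solutions reuse the y and u of the LP optimum and only change the capacities.
   Installing along each path exactly the largest capacity demand met so far (x^MS) is the
   cheapest choice compatible with y, so its objective is at most the LP optimum, which bounds
   z^MS from below.  Rounding up the level-wise maxima before accumulating them (x^TS) yields an
   integral solution that is the same on every node of a period, hence two-stage feasible, so its
   objective bounds z^TS from above.  Both capacity vectors telescope along root-to-node paths,
   and the difference of the two objectives is exactly VMS^UB. *)

section \<open>Scenario trees and root-to-node paths\<close>

lemma scen_tree_root:
  assumes "scen_tree D"
  shows "root D \<in> nodes D" "per D (root D) = 1"
  using assms unfolding scen_tree_def by auto

lemma scen_tree_per_bounds:
  "scen_tree D \<Longrightarrow> n \<in> nodes D \<Longrightarrow> 1 \<le> per D n \<and> per D n \<le> T D"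
  unfolding scen_tree_def by blast

lemma scen_tree_par:
  assumes "scen_tree D" "n \<in> nodes D" "n \<noteq> root D"
  shows "par D n \<in> nodes D" "per D n = Suc (per D (par D n))"
  using assms unfolding scen_tree_def by auto

lemma per_nonroot_ge_2:
  assumes D: "scen_tree D" and n: "n \<in> nodes D" "n \<noteq> root D"
  shows "2 \<le> per D n"
  using scen_tree_par[OF D n] scen_tree_per_bounds[OF D scen_tree_par(1)[OF D n]] by simp

lemma finite_nodes: "scen_tree D \<Longrightarrow> finite (nodes D)"
  unfolding scen_tree_def by blast

lemma ancestor_in_nodes:
  assumes D: "scen_tree D" and n: "n \<in> nodes D" and k: "k < per D n"
  shows "(par D ^^ k) n \<in> nodes D \<and> per D ((par D ^^ k) n) = per D n - k"
  using k
proof (induction k)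
  case 0
  then show ?case using n by simp
next
  case (Suc k)
  then have IH: "(par D ^^ k) n \<in> nodes D" "per D ((par D ^^ k) n) = per D n - k"
    by auto
  moreover have "(par D ^^ k) n \<noteq> root D"
    using IH Suc.prems scen_tree_root(2)[OF D] by auto
  ultimately show ?case using scen_tree_par[OF D IH(1)] by simp
qed

lemma Pth_eq_image: "Pth D n = (\<lambda>k. (par D ^^ k) n) ` {..<per D n}"
  unfolding Pth_def by auto

lemma finite_Pth: "finite (Pth D n)"
  unfolding Pth_eq_image by simp

lemma Pth_subset_nodes:
  assumes "scen_tree D" "n \<in> nodes D"
  shows "Pth D n \<subseteq> nodes D"
  unfolding Pth_eq_image using ancestor_in_nodes[OF assms] by auto

lemma per_image_Pth:
  assumes D: "scen_tree D" and n: "n \<in> nodes D"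
  shows "per D ` Pth D n = {1..per D n}"
proof -
  have "per D ` Pth D n = (\<lambda>k. per D n - k) ` {..<per D n}"
    unfolding Pth_eq_image image_image using ancestor_in_nodes[OF D n] by simp
  also have "\<dots> = {1..per D n}"
  proof safe
    fix s assume "s \<in> {1..per D n}"
    then show "s \<in> (\<lambda>k. per D n - k) ` {..<per D n}"
      by (intro image_eqI[of _ _ "per D n - s"]) auto
  qed auto
  finally show ?thesis .
qed

lemma self_in_Pth:
  assumes "scen_tree D" "n \<in> nodes D"
  shows "n \<in> Pth D n"
  using scen_tree_per_bounds[OF assms] unfolding Pth_eq_image by (auto intro!: image_eqI[of _ _ 0])

lemma Pth_root: "scen_tree D \<Longrightarrow> Pth D (root D) = {root D}"
  unfolding Pth_eq_image by (simp add: scen_tree_root lessThan_Suc)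

lemma Pth_nonroot:
  assumes D: "scen_tree D" and n: "n \<in> nodes D" "n \<noteq> root D"
  shows "Pth D n = insert n (Pth D (par D n))"
proof -
  have "(\<lambda>k. (par D ^^ k) n) ` {..<Suc (per D (par D n))}
      = insert n ((\<lambda>k. (par D ^^ Suc k) n) ` {..<per D (par D n)})"
    unfolding lessThan_Suc_eq_insert_0 image_insert image_image by simp
  also have "(\<lambda>k. (par D ^^ Suc k) n) = (\<lambda>k. (par D ^^ k) (par D n))"
    by (simp add: funpow_Suc_right del: funpow.simps)
  finally show ?thesis
    unfolding Pth_eq_image scen_tree_par(2)[OF D n] .
qed

lemma per_le_of_in_Pth:
  assumes "scen_tree D" "n \<in> nodes D" "m \<in> Pth D n"
  shows "per D m \<le> per D n"
proof -
  have "per D m \<in> {1..per D n}"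
    using assms(3) per_image_Pth[OF assms(1,2)] by blast
  then show ?thesis by simp
qed

lemma not_in_Pth_par:
  assumes D: "scen_tree D" and n: "n \<in> nodes D" "n \<noteq> root D"
  shows "n \<notin> Pth D (par D n)"
proof
  assume "n \<in> Pth D (par D n)"
  then have "per D n \<le> per D (par D n)"
    by (rule per_le_of_in_Pth[OF D scen_tree_par(1)[OF D n]])
  then show False using scen_tree_par(2)[OF D n] by simp
qed

lemma Pth_mono:
  assumes D: "scen_tree D" and n: "n \<in> nodes D" and m: "m \<in> Pth D n"
  shows "Pth D m \<subseteq> Pth D n"
proof
  obtain k where k: "m = (par D ^^ k) n" "k < per D n"
    using m unfolding Pth_eq_image by blast
  fix z assume "z \<in> Pth D m"
  then obtain j where j: "z = (par D ^^ j) m" "j < per D m"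
    unfolding Pth_eq_image by blast
  have "per D m = per D n - k"
    using ancestor_in_nodes[OF D n k(2)] k(1) by simp
  then have "j + k < per D n"
    using j(2) k(2) by linarith
  moreover have "z = (par D ^^ (j + k)) n"
    unfolding j(1) k(1) funpow_add by simp
  ultimately show "z \<in> Pth D n" unfolding Pth_eq_image by blast
qed

lemma Lev_1:
  assumes D: "scen_tree D"
  shows "Lev D 1 = {root D}"
proof -
  have "n = root D" if "n \<in> nodes D" "per D n = 1" for n
    using per_nonroot_ge_2[OF D] that by fastforce
  then show ?thesis using scen_tree_root[OF D] unfolding Lev_def by blast
qed

lemma finite_Lev: "scen_tree D \<Longrightarrow> finite (Lev D t)"
  unfolding Lev_def by (simp add: finite_nodes)

lemma finite_Ch: "scen_tree D \<Longrightarrow> finite (Ch D n)"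
  unfolding Ch_def by (simp add: finite_nodes)

lemma in_Ch_par: "n \<in> nodes D \<Longrightarrow> n \<noteq> root D \<Longrightarrow> n \<in> Ch D (par D n)"
  unfolding Ch_def by auto

lemma Ch_nonempty:
  assumes D: "scen_tree D" and n: "n \<in> nodes D - Leaves D"
  shows "Ch D n \<noteq> {}"
proof -
  have "per D n < T D"
    using n scen_tree_per_bounds[OF D, of n] unfolding Leaves_def Lev_def by auto
  then show ?thesis using D n unfolding scen_tree_def by blast
qed

lemma sum_Pth_telescope:
  fixes x F :: "'v \<Rightarrow> 'a::ab_group_add"
  assumes D: "scen_tree D"
    and root: "x (root D) = F (root D)"
    and step: "\<And>n. n \<in> nodes D \<Longrightarrow> n \<noteq> root D \<Longrightarrow> x n = F n - F (par D n)"
    and n: "n \<in> nodes D"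
  shows "(\<Sum>m\<in>Pth D n. x m) = F n"
  using n
proof (induction "per D n" arbitrary: n)
  case 0
  then show ?case using scen_tree_per_bounds[OF D] by fastforce
next
  case (Suc k)
  show ?case
  proof (cases "n = root D")
    case True
    then show ?thesis using root Pth_root[OF D] by simp
  next
    case False
    have "(\<Sum>m\<in>Pth D n. x m) = x n + (\<Sum>m\<in>Pth D (par D n). x m)"
      using Pth_nonroot[OF D Suc.prems False] not_in_Pth_par[OF D Suc.prems False]
      by (simp add: finite_Pth)
    also have "(\<Sum>m\<in>Pth D (par D n). x m) = F (par D n)"
      using Suc.hyps scen_tree_par[OF D Suc.prems False] by simp
    finally show ?thesis using step[OF Suc.prems False] by simp
  qed
qed

lemma valid_inst_scen_tree: "valid_inst D \<Longrightarrow> scen_tree D"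
  unfolding valid_inst_def by blast

lemma valid_inst_costs:
  assumes "valid_inst D" "n \<in> nodes D" "i < M D"
  shows "0 \<le> fc D (per D n) i" "0 < cap D (per D n) i"
  using assms scen_tree_per_bounds[OF valid_inst_scen_tree[OF assms(1)] assms(2)]
  unfolding valid_inst_def by auto

lemma valid_inst_prob_pos: "valid_inst D \<Longrightarrow> n \<in> nodes D \<Longrightarrow> 0 < prob D n"
  unfolding valid_inst_def by blast

lemma valid_inst_prob_root:
  assumes "valid_inst D"
  shows "prob D (root D) = 1"
proof -
  have "(\<Sum>n\<in>Lev D 1. prob D n) = 1"
    using assms unfolding valid_inst_def by auto
  then show ?thesis
    using Lev_1[OF valid_inst_scen_tree[OF assms]] by simp
qed

lemma wgt_nonneg:
  assumes "valid_inst D" "n \<in> nodes D"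
  shows "0 \<le> wgt D n"
proof (cases "n = root D")
  case False
  have D: "scen_tree D" by (rule valid_inst_scen_tree[OF assms(1)])
  have "per D n \<in> {2..T D}"
    using per_nonroot_ge_2[OF D assms(2) False] scen_tree_per_bounds[OF D assms(2)] by simp
  then show ?thesis using assms(1) False unfolding valid_inst_def wgt_def by simp
qed (simp add: wgt_def)

lemma lamt_nonneg:
  assumes "valid_inst D" "n \<in> nodes D"
  shows "0 \<le> lamt D n"
proof (cases "n \<in> Leaves D")
  case False
  then have "per D n + 1 \<in> {2..T D}"
    using assms scen_tree_per_bounds[OF valid_inst_scen_tree[OF assms(1)] assms(2)]
    unfolding Leaves_def Lev_def by auto
  then show ?thesis using assms(1) False unfolding valid_inst_def lamt_def by simp
qed (simp add: lamt_def)

section \<open>Maxima along paths and the candidate capacities\<close>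

lemma Max_Pth_par_le:
  fixes g :: "'v \<Rightarrow> 'a::linorder"
  assumes D: "scen_tree D" and n: "n \<in> nodes D" "n \<noteq> root D"
  shows "Max (g ` Pth D (par D n)) \<le> Max (g ` Pth D n)"
proof (rule Max_mono)
  show "g ` Pth D (par D n) \<subseteq> g ` Pth D n"
    using Pth_nonroot[OF D n] by blast
  show "g ` Pth D (par D n) \<noteq> {}"
    using self_in_Pth[OF D scen_tree_par(1)[OF D n]] by blast
qed (simp add: finite_Pth)

lemma Max_Pth_by_level:
  assumes "scen_tree D" "n \<in> nodes D"
  shows "Max ((\<lambda>m. h (per D m)) ` Pth D n) = Max (h ` {1..per D n})"
proof -
  have "(\<lambda>m. h (per D m)) ` Pth D n = h ` per D ` Pth D n"
    by (simp add: image_image)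
  then show ?thesis using per_image_Pth[OF assms] by simp
qed

lemma mxB_root: "scen_tree D \<Longrightarrow> mxB D y (root D) i = Bv D (per D (root D)) (y (root D)) i"
  unfolding mxB_def by (simp add: Pth_root)

lemma mxC_root:
  assumes D: "scen_tree D"
  shows "mxC D y (root D) i = real_of_int \<lceil>Bv D (per D (root D)) (y (root D)) i\<rceil>"
proof -
  have "Lev D (per D (root D)) = {root D}"
    using Lev_1[OF D] scen_tree_root(2)[OF D] by simp
  then show ?thesis unfolding mxC_def Pth_root[OF D] by simp
qed

lemma mxC_by_level:
  assumes "scen_tree D" "n \<in> nodes D"
  shows "mxC D y n i
    = Max ((\<lambda>t. real_of_int \<lceil>Max ((\<lambda>l. Bv D (per D l) (y l) i) ` Lev D t)\<rceil>) ` {1..per D n})"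
  unfolding mxC_def
  by (rule Max_Pth_by_level[OF assms,
        of "\<lambda>t. real_of_int \<lceil>Max ((\<lambda>l. Bv D (per D l) (y l) i) ` Lev D t)\<rceil>"])

lemma mxC_Ints:
  assumes "scen_tree D" "n \<in> nodes D"
  shows "mxC D y n i \<in> \<int>"
proof -
  let ?c = "\<lambda>m. real_of_int \<lceil>Max ((\<lambda>l. Bv D (per D l) (y l) i) ` Lev D (per D m))\<rceil>"
  have "mxC D y n i \<in> ?c ` Pth D n"
    unfolding mxC_def using self_in_Pth[OF assms] by (intro Max_in) (auto simp: finite_Pth)
  then show ?thesis by auto
qed

lemma Bv_le_mxC:
  assumes D: "scen_tree D" and n: "n \<in> nodes D"
  shows "Bv D (per D n) (y n) i \<le> mxC D y n i"
proof -
  let ?lev = "Max ((\<lambda>l. Bv D (per D l) (y l) i) ` Lev D (per D n))"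
  have "Bv D (per D n) (y n) i \<le> ?lev"
    using n by (intro Max_ge finite_imageI finite_Lev[OF D]) (simp add: Lev_def)
  also have "\<dots> \<le> real_of_int \<lceil>?lev\<rceil>"
    by (rule le_of_int_ceiling)
  also have "\<dots> \<le> mxC D y n i"
    unfolding mxC_def using self_in_Pth[OF D n] by (intro Max_ge) (simp_all add: finite_Pth)
  finally show ?thesis .
qed

lemma sum_Pth_xMS: "scen_tree D \<Longrightarrow> n \<in> nodes D \<Longrightarrow> (\<Sum>m\<in>Pth D n. xMS D y m i) = mxB D y n i"
  by (rule sum_Pth_telescope[where F = "\<lambda>m. mxB D y m i"]) (simp_all add: xMS_def mxB_root)

lemma sum_Pth_xTS: "scen_tree D \<Longrightarrow> n \<in> nodes D \<Longrightarrow> (\<Sum>m\<in>Pth D n. xTS D y m i) = mxC D y n i"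
  by (rule sum_Pth_telescope[where F = "\<lambda>m. mxC D y m i"]) (simp_all add: xTS_def mxC_root)

section \<open>Feasibility of the two-stage candidate\<close>

lemma feasible_weaken:
  assumes "feasible D ig ts x y eta u" "ig' \<longrightarrow> ig" "ts' \<longrightarrow> ts"
  shows "feasible D ig' ts' x y eta u"
  using assms unfolding feasible_def by blast

lemma stage_cost_le_eta_of:
  assumes "scen_tree D" "n \<in> nodes D" "n \<noteq> root D"
  shows "stage_cost D x y n \<le> u n + eta_of D x y u (par D n)"
proof -
  have "stage_cost D x y n - u n \<le> eta_of D x y u (par D n)"
    unfolding eta_of_def using in_Ch_par[OF assms(2,3)]
    by (intro Max_ge finite_imageI finite_Ch[OF assms(1)]) simp
  then show ?thesis by simp
qed

lemma eta_of_le: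
  assumes "scen_tree D" "n \<in> nodes D - Leaves D"
    and "\<And>m. m \<in> Ch D n \<Longrightarrow> stage_cost D x y m \<le> u m + eta n"
  shows "eta_of D x y u n \<le> eta n"
  unfolding eta_of_def
proof (rule Max.boundedI)
  show "finite ((\<lambda>m. stage_cost D x y m - u m) ` Ch D n)"
    by (simp add: finite_Ch[OF assms(1)])
  show "(\<lambda>m. stage_cost D x y m - u m) ` Ch D n \<noteq> {}"
    using Ch_nonempty[OF assms(1,2)] by simp
  fix a assume "a \<in> (\<lambda>m. stage_cost D x y m - u m) ` Ch D n"
  then show "a \<le> eta n" using assms(3) by fastforce
qed

lemma xTS_nonneg:
  assumes v: "valid_inst D" and y: "\<forall>n\<in>nodes D. \<forall>i<M D. \<forall>j<N D. 0 \<le> y n i j"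
    and n: "n \<in> nodes D" and i: "i < M D"
  shows "0 \<le> xTS D y n i"
proof (cases "n = root D")
  case True
  have "0 \<le> Bv D (per D n) (y n) i"
    unfolding Bv_def using valid_inst_costs(2)[OF v n i] y n i
    by (auto intro!: divide_nonneg_nonneg sum_nonneg)
  then show ?thesis using True by (simp add: xTS_def)
next
  case False
  then show ?thesis
    using Max_Pth_par_le[OF valid_inst_scen_tree[OF v] n False] by (simp add: xTS_def mxC_def)
qed

lemma xTS_Ints:
  assumes D: "scen_tree D" and n: "n \<in> nodes D"
  shows "xTS D y n i \<in> \<int>"
  using mxC_Ints[OF D n] mxC_Ints[OF D scen_tree_par(1)[OF D n]]
  by (simp add: xTS_def Ints_diff)

lemma xTS_level_eq:
  assumes D: "scen_tree D" and m: "m \<in> Lev D t" and n: "n \<in> Lev D t"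
  shows "xTS D y m i = xTS D y n i"
proof (cases "t = 1")
  case True
  then show ?thesis using m n Lev_1[OF D] by simp
next
  case False
  have mn: "m \<in> nodes D" "n \<in> nodes D" "per D m = per D n"
    using m n by (auto simp: Lev_def)
  have "m \<noteq> root D" "n \<noteq> root D"
    using m n False scen_tree_root(2)[OF D] by (auto simp: Lev_def)
  note pm = scen_tree_par[OF D mn(1) this(1)] and pn = scen_tree_par[OF D mn(2) this(2)]
  have "per D (par D m) = per D (par D n)"
    using pm(2) pn(2) mn(3) by simp
  then show ?thesis using \<open>m \<noteq> root D\<close> \<open>n \<noteq> root D\<close> mn(3)
    by (simp add: xTS_def mxC_by_level[OF D mn(1)] mxC_by_level[OF D mn(2)]
        mxC_by_level[OF D pm(1)] mxC_by_level[OF D pn(1)])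
qed

lemma feasible_xTS:
  assumes v: "valid_inst D" and f: "feasible D ig ts x y eta u"
  shows "feasible D True True (xTS D y) y (eta_of D (xTS D y) y u) u"
proof -
  have D: "scen_tree D" by (rule valid_inst_scen_tree[OF v])
  have "\<forall>n\<in>nodes D. \<forall>i<M D. \<forall>j<N D. 0 \<le> y n i j"
    using f unfolding feasible_def by blast
  then have "\<forall>n\<in>nodes D. \<forall>i<M D. 0 \<le> xTS D y n i \<and> xTS D y n i \<in> \<int>"
    using xTS_nonneg[OF v] xTS_Ints[OF D] by blast
  moreover have "\<forall>n\<in>nodes D. \<forall>i<M D. Bv D (per D n) (y n) i \<le> (\<Sum>m\<in>Pth D n. xTS D y m i)"
    using Bv_le_mxC[OF D] sum_Pth_xTS[OF D] by simp
  moreover have "\<forall>n\<in>nodes D - {root D}.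
      stage_cost D (xTS D y) y n \<le> u n + eta_of D (xTS D y) y u (par D n)"
    using stage_cost_le_eta_of[OF D] by blast
  moreover have "\<forall>t\<in>{1..T D}. \<forall>m\<in>Lev D t. \<forall>n\<in>Lev D t. \<forall>i<M D. xTS D y m i = xTS D y n i"
    using xTS_level_eq[OF D] by blast
  ultimately show ?thesis using f unfolding feasible_def by blast
qed

section \<open>Objective values\<close>

lemma mxB_le_sum_Pth:
  assumes D: "scen_tree D" and f: "feasible D ig ts x y eta u"
    and n: "n \<in> nodes D" and i: "i < M D"
  shows "mxB D y n i \<le> (\<Sum>m\<in>Pth D n. x m i)"
  unfolding mxB_def
proof (rule Max.boundedI)
  show "finite ((\<lambda>m. Bv D (per D m) (y m) i) ` Pth D n)"
    by (simp add: finite_Pth)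
  show "(\<lambda>m. Bv D (per D m) (y m) i) ` Pth D n \<noteq> {}"
    using self_in_Pth[OF D n] by blast
  fix b assume "b \<in> (\<lambda>m. Bv D (per D m) (y m) i) ` Pth D n"
  then obtain m where m: "m \<in> Pth D n" and b: "b = Bv D (per D m) (y m) i"
    by blast
  have m_node: "m \<in> nodes D"
    using Pth_subset_nodes[OF D n] m by blast
  have "b \<le> (\<Sum>k\<in>Pth D m. x k i)"
    using f m_node i b unfolding feasible_def by blast
  also have "\<dots> \<le> (\<Sum>k\<in>Pth D n. x k i)"
  proof (rule sum_mono2[OF finite_Pth Pth_mono[OF D n m]])
    fix k assume "k \<in> Pth D n - Pth D m"
    then show "0 \<le> x k i"
      using Pth_subset_nodes[OF D n] f i unfolding feasible_def by blast
  qed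
  finally show "b \<le> (\<Sum>k\<in>Pth D n. x k i)" .
qed

lemma stage_cost_mono:
  assumes v: "valid_inst D" and n: "n \<in> nodes D"
    and x: "\<And>i. i < M D \<Longrightarrow> (\<Sum>m\<in>Pth D n. x' m i) \<le> (\<Sum>m\<in>Pth D n. x m i)"
  shows "stage_cost D x' y n \<le> stage_cost D x y n"
  unfolding stage_cost_def
proof (rule add_right_mono, rule sum_mono)
  fix i assume "i \<in> {..<M D}"
  then show "fc D (per D n) i * (\<Sum>m\<in>Pth D n. x' m i) \<le> fc D (per D n) i * (\<Sum>m\<in>Pth D n. x m i)"
    using x valid_inst_costs(1)[OF v n] by (simp add: mult_left_mono)
qed

lemma stage_cost_diff:
  "stage_cost D x' y n - stage_cost D x y n
    = (\<Sum>i<M D. fc D (per D n) i * ((\<Sum>m\<in>Pth D n. x' m i) - (\<Sum>m\<in>Pth D n. x m i)))"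
  unfolding stage_cost_def right_diff_distrib sum_subtractf by simp

lemma obj_mono:
  assumes v: "valid_inst D"
    and sc: "\<And>n. n \<in> nodes D \<Longrightarrow> stage_cost D x' y n \<le> stage_cost D x y n"
    and eta: "\<And>n. n \<in> nodes D - Leaves D \<Longrightarrow> eta' n \<le> eta n"
  shows "obj D x' y eta' u \<le> obj D x y eta u"
  unfolding obj_def
proof (rule sum_mono)
  fix n assume n: "n \<in> nodes D"
  have "lamt D n * eta' n \<le> lamt D n * eta n"
  proof (cases "n \<in> Leaves D")
    case False
    then show ?thesis using eta n lamt_nonneg[OF v n] by (simp add: mult_left_mono)
  qed (simp add: lamt_def)
  then show "prob D n * (wgt D n * stage_cost D x' y n + lamt D n * eta' n + alpt D n * u n)
      \<le> prob D n * (wgt D n * stage_cost D x y n + lamt D n * eta n + alpt D n * u n)"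
    using mult_left_mono[OF sc[OF n] wgt_nonneg[OF v n]] valid_inst_prob_pos[OF v n]
    by (intro mult_left_mono) auto
qed

lemma obj_diff:
  assumes "scen_tree D"
  shows "obj D x' y eta' u - obj D x y eta u
    = (\<Sum>n\<in>nodes D. prob D n * wgt D n * (stage_cost D x' y n - stage_cost D x y n))
      + (\<Sum>n\<in>nodes D - Leaves D. prob D n * lam D (per D n + 1) * (eta' n - eta n))"
proof -
  have "obj D x' y eta' u - obj D x y eta u
    = (\<Sum>n\<in>nodes D. prob D n * wgt D n * (stage_cost D x' y n - stage_cost D x y n))
      + (\<Sum>n\<in>nodes D. prob D n * lamt D n * (eta' n - eta n))"
    unfolding obj_def sum_subtractf[symmetric] sum.distrib[symmetric]
    by (rule sum.cong) (simp_all add: algebra_simps)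
  also have "(\<Sum>n\<in>nodes D. prob D n * lamt D n * (eta' n - eta n))
    = (\<Sum>n\<in>nodes D - Leaves D. prob D n * lam D (per D n + 1) * (eta' n - eta n))"
    using finite_nodes[OF assms]
    by (intro sum.mono_neutral_cong_right) (auto simp: lamt_def)
  finally show ?thesis .
qed

lemma obj_xMS_le:
  assumes v: "valid_inst D" and f: "feasible D ig ts x y eta u"
  shows "obj D (xMS D y) y (eta_of D (xMS D y) y u) u \<le> obj D x y eta u"
proof (rule obj_mono[OF v])
  have D: "scen_tree D" by (rule valid_inst_scen_tree[OF v])
  show sc: "stage_cost D (xMS D y) y n \<le> stage_cost D x y n" if n: "n \<in> nodes D" for n
    using stage_cost_mono[OF v n] mxB_le_sum_Pth[OF D f n] sum_Pth_xMS[OF D n] by simp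
  show "eta_of D (xMS D y) y u n \<le> eta n" if n: "n \<in> nodes D - Leaves D" for n
  proof (rule eta_of_le[OF D n])
    fix m assume "m \<in> Ch D n"
    then have m: "m \<in> nodes D" "m \<noteq> root D" "par D m = n"
      unfolding Ch_def by auto
    then have "stage_cost D x y m \<le> u m + eta n"
      using f unfolding feasible_def by force
    then show "stage_cost D (xMS D y) y m \<le> u m + eta n"
      using sc[OF m(1)] by linarith
  qed
qed

lemma obj_xTS_minus_obj_xMS:
  assumes v: "valid_inst D"
  shows "obj D (xTS D y) y (eta_of D (xTS D y) y u) u - obj D (xMS D y) y (eta_of D (xMS D y) y u) u
    = VMS_UB D y u"
proof -
  have D: "scen_tree D" by (rule valid_inst_scen_tree[OF v])
  define gap where "gap n = (\<Sum>i<M D. fc D (per D n) i * (mxC D y n i - mxB D y n i))" for n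
  have "stage_cost D (xTS D y) y n - stage_cost D (xMS D y) y n = gap n" if "n \<in> nodes D" for n
    unfolding stage_cost_diff gap_def sum_Pth_xTS[OF D that] sum_Pth_xMS[OF D that] ..
  then have "(\<Sum>n\<in>nodes D. prob D n * wgt D n * (stage_cost D (xTS D y) y n - stage_cost D (xMS D y) y n))
      = (\<Sum>n\<in>nodes D. prob D n * wgt D n * gap n)"
    by simp
  also have "\<dots> = prob D (root D) * wgt D (root D) * gap (root D)
      + (\<Sum>n\<in>nodes D - {root D}. prob D n * wgt D n * gap n)"
    by (rule sum.remove[OF finite_nodes[OF D] scen_tree_root(1)[OF D]])
  also have "\<dots> = (\<Sum>i<M D. fc D (per D (root D)) i *
        (real_of_int \<lceil>Bv D (per D (root D)) (y (root D)) i\<rceil> - Bv D (per D (root D)) (y (root D)) i))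
      + (\<Sum>n\<in>nodes D - {root D}. prob D n * (1 - lam D (per D n)) * gap n)"
    by (simp add: valid_inst_prob_root[OF v] wgt_def gap_def mxC_root[OF D] mxB_root[OF D])
  finally show ?thesis
    unfolding obj_diff[OF D] VMS_UB_def gap_def by simp
qed

lemma zTS_le_obj:
  assumes "feasible D True True x y eta u"
    and "\<And>x y eta u. feasible D True True x y eta u \<Longrightarrow> lb \<le> obj D x y eta u"
  shows "zTS D \<le> obj D x y eta u"
  unfolding zTS_def
proof (rule cInf_lower)
  show "obj D x y eta u \<in> {obj D x y eta u |x y eta u. feasible D True True x y eta u}"
    using assms(1) by blast
  show "bdd_below {obj D x y eta u |x y eta u. feasible D True True x y eta u}"
    using assms(2) by (intro bdd_belowI[of _ lb]) blast
qed

lemma lower_bound_le_zMS: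
  assumes "feasible D True False x y eta u"
    and "\<And>x y eta u. feasible D True False x y eta u \<Longrightarrow> lb \<le> obj D x y eta u"
  shows "lb \<le> zMS D"
  unfolding zMS_def using assms by (intro cInf_greatest) blast+

theorem theorem2:
  fixes D :: "'v inst"
    and xL :: "'v \<Rightarrow> nat \<Rightarrow> real" and yL :: "'v \<Rightarrow> nat \<Rightarrow> nat \<Rightarrow> real"
    and etaL uL :: "'v \<Rightarrow> real"
  assumes "valid_inst D"
    and "feasible D False False xL yL etaL uL"
    and "\<forall>x y eta u. feasible D False False x y eta u \<longrightarrow> obj D xL yL etaL uL \<le> obj D x y eta u"
  shows "VMS D \<le> VMS_UB D yL uL"
proof -
  let ?zLP = "obj D xL yL etaL uL"
  let ?oTS = "obj D (xTS D yL) yL (eta_of D (xTS D yL) yL uL) uL"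
  let ?oMS = "obj D (xMS D yL) yL (eta_of D (xMS D yL) yL uL) uL"
  have TS: "feasible D True True (xTS D yL) yL (eta_of D (xTS D yL) yL uL) uL"
    by (rule feasible_xTS[OF assms(1,2)])
  have LP_lower_bound: "?zLP \<le> obj D x y eta u" if "feasible D ig ts x y eta u" for ig ts x y eta u
    using assms(3) feasible_weaken[OF that, where ig' = False and ts' = False] by simp
  have "zTS D \<le> ?oTS"
    using zTS_le_obj[OF TS LP_lower_bound] .
  moreover have "?zLP \<le> zMS D"
    using lower_bound_le_zMS[OF feasible_weaken[OF TS, where ig' = True and ts' = False] LP_lower_bound]
    by simp
  moreover have "?oMS \<le> ?zLP"
    by (rule obj_xMS_le[OF assms(1,2)])
  moreover have "?oTS - ?oMS = VMS_UB D yL uL"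
    by (rule obj_xTS_minus_obj_xMS[OF assms(1)])
  ultimately show ?thesis
    unfolding VMS_def by linarith
qed

end
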